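(* Let $p\ge 2$ and let $\mathbb{F}_p$ be a binary floating-point format with $p$-bit significands and unit roundoff $u=2^{-p}$. Let $t\ge 1$ and $s_A,s_B\ge 1$ be integers. Let $A\in\mathbb{F}_p^{m\times k}$ and $B\in\mathbb{F}_p^{k\times n}$ have all entries nonzero. Define the scale factors $\alpha\in\mathbb{R}^m$, $\beta\in\mathbb{R}^n$ and the integer slices $A_{(\ell)}$ ($1\le \ell\le s_A$) and $B^{(h)}$ ($1\le h\le s_B$) as in the context, and put $$\tilde C=\alpha\beta^T\circ\sum_{\ell=1}^{s_A}\sum_{h=1}^{s_B}2^{-(\ell+h)t}A_{(\ell)}B^{(h)} .$$ Suppose $\hat C$ is computed as follows: each integer product $A_{(\ell)}B^{(h)}$ is computed exactly, converted exactly to $\mathbb{F}_p$ and scaled exactly by $2^{-(\ell+h)t}$ and by $\alpha\beta^T$ (entrywise), and then the resulting $\psi=s_As_B$ matrices are added entrywise in floating-point arithmetic (in any order) obeying the standard model $\mathrm{fl}(x+y)=(x+y)(1+\delta)$, $|\delta|\le u$, with no overflow or underflow, and $\psi u<1$. Then, entrywise, $$|\hat C-AB|\le\bigl(\zeta_{A,B}+\gamma_{\psi-1}(1+\zeta_{A,B})\bigr)\,|A|\,|B|,$$ where $\zeta_{A,B}=2^{-s_At}\kappa_A+2^{-s_Bt}\kappa_B+2^{-(s_A+s_B)t}\kappa_A\kappa_B$ and $\gamma_j=ju/(1-ju)$.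
   Context: Absolute values of matrices and inequalities between matrices are entrywise; $\circ$ is the Hadamard (entrywise) product. For $x\in\mathbb{R}$, $[x]$ denotes truncation toward zero ($\lfloor x\rfloor$ if $x\ge0$, $\lceil x\rceil$ if $x<0$). Scale factors: $\alpha_i$ is the smallest power of two strictly larger than $M_i=\max_{1\le j\le k}|a_{ij}|$ (i.e. $\alpha_i=2^{\lfloor\log_2 M_i\rfloor+1}$), and $\beta_j$ is the smallest power of two strictly larger than $N_j=\max_{1\le i\le k}|b_{ij}|$. Slices: $A_{(\ell)}=\bigl[2^{\ell t}\bigl(\mathrm{diag}(\alpha)^{-1}A-\sum_{r=1}^{\ell-1}2^{-rt}A_{(r)}\bigr)\bigr]$ for $\ell=1,\dots,s_A$, and $B^{(h)}=\bigl[2^{ht}\bigl(B\,\mathrm{diag}(\beta)^{-1}-\sum_{r=1}^{h-1}2^{-rt}B^{(r)}\bigr)\bigr]$ for $h=1,\dots,s_B$ (integer matrices, applied entrywise). Scaling measures: $\kappa_A=2\max_i\frac{\max_j|a_{ij}|}{\min_j|a_{ij}|}$ and $\kappa_B=2\max_j\frac{\max_i|b_{ij}|}{\min_i|b_{ij}|}$. *)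

theory Defs
  imports "HOL-Analysis.Analysis" "HOL-Library.Multiset"
begin

definition is_fp :: "nat \<Rightarrow> real \<Rightarrow> bool" where
  "is_fp p x \<longleftrightarrow> (\<exists>M e :: int. \<bar>M\<bar> < 2 ^ p \<and> x = real_of_int M * 2 powr real_of_int e)"

definition trunc0 :: "real \<Rightarrow> int" where
  "trunc0 x = (if x \<ge> 0 then \<lfloor>x\<rfloor> else \<lceil>x\<rceil>)"

definition pow2_above :: "real \<Rightarrow> real" where
  "pow2_above M = 2 powr real_of_int (\<lfloor>log 2 M\<rfloor> + 1)"

function slice :: "nat \<Rightarrow> real \<Rightarrow> nat \<Rightarrow> int" where
  "slice t x l = trunc0 (2 ^ (l * t) * (x - (\<Sum>r\<in>{1..<l}. real_of_int (slice t x r) / 2 ^ (r * t))))"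
  by auto
termination by (relation "Wellfounded.measure (\<lambda>(t, x, l). l)") auto

declare slice.simps [simp del]

definition mabs :: "real ^ 'b ^ 'a \<Rightarrow> real ^ 'b ^ 'a" where
  "mabs A = (\<chi> i j. \<bar>A $ i $ j\<bar>)"

definition alphaA :: "real ^ 'k ^ 'm \<Rightarrow> 'm \<Rightarrow> real" where
  "alphaA A i = pow2_above (Max ((\<lambda>j. \<bar>A $ i $ j\<bar>) ` UNIV))"

definition betaB :: "real ^ 'n ^ 'k \<Rightarrow> 'n \<Rightarrow> real" where
  "betaB B j = pow2_above (Max ((\<lambda>i. \<bar>B $ i $ j\<bar>) ` UNIV))"

definition sliceA :: "nat \<Rightarrow> real ^ 'k ^ 'm \<Rightarrow> nat \<Rightarrow> 'm \<Rightarrow> 'k \<Rightarrow> int" where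
  "sliceA t A l i j = slice t (A $ i $ j / alphaA A i) l"

definition sliceB :: "nat \<Rightarrow> real ^ 'n ^ 'k \<Rightarrow> nat \<Rightarrow> 'k \<Rightarrow> 'n \<Rightarrow> int" where
  "sliceB t B h i j = slice t (B $ i $ j / betaB B j) h"

definition sliceprod :: "nat \<Rightarrow> real ^ 'k ^ 'm \<Rightarrow> real ^ 'n ^ 'k \<Rightarrow> nat \<Rightarrow> nat \<Rightarrow> 'm \<Rightarrow> 'n \<Rightarrow> int" where
  "sliceprod t A B l h i j = (\<Sum>q\<in>UNIV. sliceA t A l i q * sliceB t B h q j)"

definition kappaA :: "real ^ 'k ^ 'm \<Rightarrow> real" where
  "kappaA A = 2 * Max ((\<lambda>i. Max ((\<lambda>j. \<bar>A $ i $ j\<bar>) ` UNIV) / Min ((\<lambda>j. \<bar>A $ i $ j\<bar>) ` UNIV)) ` UNIV)"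

definition kappaB :: "real ^ 'n ^ 'k \<Rightarrow> real" where
  "kappaB B = 2 * Max ((\<lambda>j. Max ((\<lambda>i. \<bar>B $ i $ j\<bar>) ` UNIV) / Min ((\<lambda>i. \<bar>B $ i $ j\<bar>) ` UNIV)) ` UNIV)"

definition gamma :: "real \<Rightarrow> nat \<Rightarrow> real" where
  "gamma u j = real j * u / (1 - real j * u)"

text \<open>Floating-point summation of a multiset of terms, in any order and with any
  parenthesization, each addition obeying the standard model fl(x+y) = (x+y)(1+delta),
  |delta| <= u.\<close>
inductive fl_sum :: "real \<Rightarrow> real multiset \<Rightarrow> real \<Rightarrow> bool" for u :: real where
  single: "fl_sum u {#x#} x"
| add: "\<lbrakk> fl_sum u M1 a; fl_sum u M2 b; \<bar>\<delta>\<bar> \<le> u \<rbrakk> \<Longrightarrow> fl_sum u (M1 + M2) ((a + b) * (1 + \<delta>))"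

end

theory Submission
  imports Defs
begin

(* For x \<ge> 0 the slices of x are its successive truncated base-2^t digits, so the first s of
   them reconstruct x up to 2^(-s t) and the weighted sum of their moduli is at most x; slicing
   commutes with negation, which gives the same for any sign. Scaling row i of A by alpha_i,
   which is at most twice the largest and so at most kappa_A times every entry of the row, turns
   the digit error into the relative error kappa_A 2^(-s_A t) per entry, and likewise for B.
   The exact sum of the psi scaled slice products is the product of the two truncated expansions,
   so it differs from AB by at most zeta |A||B|. Summing psi terms in floating point costs at most
   gamma_(psi-1) times the sum of their moduli, which by the digit bound is at most |A||B|. *)

lemma trunc0_uminus: "trunc0 (- x) = - trunc0 x"
  unfolding trunc0_def by (auto simp: ceiling_minus floor_minus)

lemma trunc0_nonneg: "x \<ge> 0 \<Longrightarrow> trunc0 x = \<lfloor>x\<rfloor>"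
  unfolding trunc0_def by simp

lemma slice_uminus: "slice t (- x) l = - slice t x l"
proof (induction l rule: less_induct)
  case (less l)
  have "(\<Sum>r\<in>{1..<l}. real_of_int (slice t (- x) r) / 2 ^ (r * t))
      = - (\<Sum>r\<in>{1..<l}. real_of_int (slice t x r) / 2 ^ (r * t))"
    using less by (simp add: sum_negf[symmetric])
  then show ?case
    by (subst (1 2) slice.simps) (simp add: trunc0_uminus[symmetric] algebra_simps)
qed

definition slice_sum :: "nat \<Rightarrow> real \<Rightarrow> nat \<Rightarrow> real" where
  "slice_sum t x n = (\<Sum>r\<in>{1..n}. real_of_int (slice t x r) / 2 ^ (r * t))"

lemma slice_sum_uminus: "slice_sum t (- x) n = - slice_sum t x n"
  unfolding slice_sum_def slice_uminus by (simp add: sum_negf)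

lemma slice_Suc: "slice t x (Suc n) = trunc0 (2 ^ (Suc n * t) * (x - slice_sum t x n))"
  unfolding slice_sum_def by (subst slice.simps) (simp add: atLeastLessThanSuc_atLeastAtMost)

lemma slice_sum_Suc:
  "slice_sum t x (Suc n) = slice_sum t x n + real_of_int (slice t x (Suc n)) / 2 ^ (Suc n * t)"
  unfolding slice_sum_def by simp

lemma slice_residual_nonneg:
  assumes "x \<ge> 0"
  shows "0 \<le> x - slice_sum t x n \<and> (n \<ge> 1 \<longrightarrow> x - slice_sum t x n < 1 / 2 ^ (n * t))"
proof (induction n)
  case 0
  then show ?case using assms by (simp add: slice_sum_def)
next
  case (Suc n)
  define y where "y = 2 ^ (Suc n * t) * (x - slice_sum t x n)"
  have "y \<ge> 0" using Suc unfolding y_def by simp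
  then have "slice t x (Suc n) = \<lfloor>y\<rfloor>"
    unfolding slice_Suc y_def[symmetric] by (rule trunc0_nonneg)
  then have "x - slice_sum t x (Suc n) = (y - \<lfloor>y\<rfloor>) / 2 ^ (Suc n * t)"
    unfolding slice_sum_Suc y_def by (simp add: field_simps)
  moreover have "0 \<le> y - \<lfloor>y\<rfloor>" "y - \<lfloor>y\<rfloor> < 1" by linarith+
  ultimately show ?case by (simp add: divide_strict_right_mono)
qed

lemma slice_nonneg: "x \<ge> 0 \<Longrightarrow> r \<ge> 1 \<Longrightarrow> slice t x r \<ge> 0"
  using slice_residual_nonneg[of x t "r - 1"]
  by (cases r) (simp_all add: slice_Suc trunc0_def)

lemma slice_sum_error:
  assumes "n \<ge> 1"
  shows "\<bar>x - slice_sum t x n\<bar> < 1 / 2 ^ (n * t)"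
proof (cases "x \<ge> 0")
  case True
  then show ?thesis using slice_residual_nonneg[of x t n] assms by simp
next
  case False
  then have "\<bar>- x - slice_sum t (- x) n\<bar> < 1 / 2 ^ (n * t)"
    using slice_residual_nonneg[of "- x" t n] assms by simp
  then show ?thesis unfolding slice_sum_uminus by (simp add: abs_minus_commute)
qed

lemma slice_abs_sum_le: "(\<Sum>r\<in>{1..n}. \<bar>real_of_int (slice t x r)\<bar> / 2 ^ (r * t)) \<le> \<bar>x\<bar>"
proof -
  have "(\<Sum>r\<in>{1..n}. \<bar>real_of_int (slice t y r)\<bar> / 2 ^ (r * t)) \<le> y" if "y \<ge> 0" for y
  proof -
    have "(\<Sum>r\<in>{1..n}. \<bar>real_of_int (slice t y r)\<bar> / 2 ^ (r * t)) = slice_sum t y n"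
      unfolding slice_sum_def using slice_nonneg[OF that] by (intro sum.cong) auto
    then show ?thesis using slice_residual_nonneg[OF that, of t n] by simp
  qed
  from this[of x] this[of "- x"] show ?thesis
    by (cases "x \<ge> 0") (simp_all add: slice_uminus)
qed

lemma pow2_above_pos: "pow2_above M > 0"
  unfolding pow2_above_def by simp

lemma pow2_above_le_double: "M > 0 \<Longrightarrow> pow2_above M \<le> 2 * M"
proof -
  assume "M > 0"
  have "pow2_above M \<le> 2 powr (log 2 M + 1)"
    unfolding pow2_above_def by (intro powr_mono) linarith+
  also have "\<dots> = 2 * M" using \<open>M > 0\<close> by (simp add: powr_add)
  finally show ?thesis .
qed

lemma pow2_above_Max_abs_le:
  fixes f :: "'a::finite \<Rightarrow> real"
  assumes nz: "\<And>q. f q \<noteq> 0"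
  shows "pow2_above (Max (range (\<lambda>q. \<bar>f q\<bar>)))
    \<le> 2 * (Max (range (\<lambda>q. \<bar>f q\<bar>)) / Min (range (\<lambda>q. \<bar>f q\<bar>))) * \<bar>f q\<bar>"
proof -
  define M where "M = Max (range (\<lambda>q. \<bar>f q\<bar>))"
  define m where "m = Min (range (\<lambda>q. \<bar>f q\<bar>))"
  have "m \<in> range (\<lambda>q. \<bar>f q\<bar>)" unfolding m_def by (intro Min_in) auto
  then have m_pos: "m > 0" using nz by auto
  have M_pos: "M > 0" unfolding M_def using nz by (simp add: Max_gr_iff)
  have "pow2_above M \<le> 2 * (M / m) * m"
    using pow2_above_le_double[OF M_pos] m_pos by simp
  also have "\<dots> \<le> 2 * (M / m) * \<bar>f q\<bar>"
    using m_pos M_pos unfolding m_def by (intro mult_left_mono Min_le) auto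
  finally show ?thesis unfolding M_def m_def .
qed

lemma alphaA_pos: "alphaA A i > 0"
  unfolding alphaA_def by (rule pow2_above_pos)

lemma betaB_pos: "betaB B j > 0"
  unfolding betaB_def by (rule pow2_above_pos)

lemma kappaA_nonneg: "kappaA A \<ge> 0"
  unfolding kappaA_def
  by (auto intro!: divide_nonneg_nonneg simp: Max_ge_iff Min_ge_iff)

lemma kappaB_nonneg: "kappaB B \<ge> 0"
  unfolding kappaB_def
  by (auto intro!: divide_nonneg_nonneg simp: Max_ge_iff Min_ge_iff)

lemma alphaA_le_kappaA:
  assumes "\<And>q. A $ i $ q \<noteq> 0"
  shows "alphaA A i \<le> kappaA A * \<bar>A $ i $ q\<bar>"
  unfolding alphaA_def kappaA_def
  using pow2_above_Max_abs_le[of "\<lambda>q. A $ i $ q" q, OF assms]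
  by (rule order_trans) (intro mult_right_mono mult_left_mono Max_ge; simp)

lemma betaB_le_kappaB:
  assumes "\<And>q. B $ q $ j \<noteq> 0"
  shows "betaB B j \<le> kappaB B * \<bar>B $ q $ j\<bar>"
  unfolding betaB_def kappaB_def
  using pow2_above_Max_abs_le[of "\<lambda>q. B $ q $ j" q, OF assms]
  by (rule order_trans) (intro mult_right_mono mult_left_mono Max_ge; simp)

lemma abs_sum_mset_le: "\<bar>sum_mset (M :: real multiset)\<bar> \<le> sum_mset (image_mset abs M)"
  by (induction M) (auto intro: order_trans[OF abs_triangle_ineq])

lemma sum_mset_abs_nonneg: "0 \<le> sum_mset (image_mset abs (M :: real multiset))"
  using order_trans[OF abs_ge_zero abs_sum_mset_le] .

lemma fl_sum_size_pos: "fl_sum u M s \<Longrightarrow> size M \<ge> 1"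
  by (induction rule: fl_sum.induct) auto

lemma fl_sum_error:
  assumes "fl_sum u M s" and u: "u \<ge> 0"
  shows "\<bar>s - sum_mset M\<bar> \<le> ((1 + u) ^ (size M - 1) - 1) * sum_mset (image_mset abs M)"
  using assms(1)
proof (induction rule: fl_sum.induct)
  case (single x)
  then show ?case by simp
next
  case (add M1 a M2 b \<delta>)
  define S1 where "S1 = sum_mset (image_mset abs M1)"
  define S2 where "S2 = sum_mset (image_mset abs M2)"
  define E1 where "E1 = (1 + u) ^ (size M1 - 1)"
  define E2 where "E2 = (1 + u) ^ (size M2 - 1)"
  define E where "E = (1 + u) ^ (size (M1 + M2) - 1)"
  have n1: "size M1 \<ge> 1" and n2: "size M2 \<ge> 1"
    using add.hyps fl_sum_size_pos by blast+
  have "E1 * (1 + u) \<le> E" and "E2 * (1 + u) \<le> E"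
    unfolding E1_def E2_def E_def using n1 n2 u
    by (auto simp flip: power_Suc2 intro!: power_increasing)
  moreover have "S1 \<ge> 0" "S2 \<ge> 0"
    unfolding S1_def S2_def by (rule sum_mset_abs_nonneg)+
  ultimately have E_bound:
    "(E1 * (1 + u) - 1) * S1 + (E2 * (1 + u) - 1) * S2 \<le> (E - 1) * S1 + (E - 1) * S2"
    by (intro add_mono mult_right_mono) auto
  have e1: "\<bar>a - sum_mset M1\<bar> \<le> (E1 - 1) * S1"
    and e2: "\<bar>b - sum_mset M2\<bar> \<le> (E2 - 1) * S2"
    using add.IH unfolding E1_def E2_def S1_def S2_def by auto
  have "\<bar>a\<bar> \<le> E1 * S1" using e1 abs_sum_mset_le[of M1] unfolding S1_def by argo
  moreover have "\<bar>b\<bar> \<le> E2 * S2" using e2 abs_sum_mset_le[of M2] unfolding S2_def by argo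
  ultimately have "\<bar>\<delta> * (a + b)\<bar> \<le> u * (E1 * S1 + E2 * S2)"
    unfolding abs_mult using add.hyps(3) abs_triangle_ineq[of a b]
    by (intro mult_mono) auto
  moreover have "(a + b) * (1 + \<delta>) - sum_mset (M1 + M2)
      = (a - sum_mset M1) + (b - sum_mset M2) + \<delta> * (a + b)"
    by (simp add: algebra_simps)
  ultimately have "\<bar>(a + b) * (1 + \<delta>) - sum_mset (M1 + M2)\<bar>
      \<le> (E1 * (1 + u) - 1) * S1 + (E2 * (1 + u) - 1) * S2"
    using e1 e2 by (simp add: algebra_simps)
  with E_bound show ?case unfolding E_def S1_def S2_def by (simp add: distrib_left)
qed

lemma one_plus_power_le_gamma:
  fixes u :: real
  assumes u: "u \<ge> 0" and mu: "real m * u < 1"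
  shows "(1 + u) ^ m - 1 \<le> gamma u m"
proof (cases "m = 0")
  case True
  then show ?thesis by (simp add: gamma_def)
next
  case False
  then have "u \<le> real m * u" using u by (simp add: mult_le_cancel_right1)
  then have "u < 1" using mu by linarith
  have "(1 + u) ^ m * (1 - real m * u) \<le> (1 + u) ^ m * (1 - u) ^ m"
    using Bernoulli_inequality[of "- u" m] \<open>u < 1\<close> u by (intro mult_left_mono) auto
  also have "\<dots> = (1 - u\<^sup>2) ^ m"
    by (simp add: power_mult_distrib[symmetric] power2_eq_square algebra_simps)
  also have "\<dots> \<le> 1" using u \<open>u < 1\<close> by (intro power_le_one) (auto simp: power_le_one)
  finally have "(1 + u) ^ m \<le> 1 / (1 - real m * u)" using mu by (simp add: field_simps)
  then show ?thesis unfolding gamma_def using mu by (simp add: field_simps)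
qed

lemma gamma_nonneg: "u \<ge> 0 \<Longrightarrow> real m * u < 1 \<Longrightarrow> gamma u m \<ge> 0"
  unfolding gamma_def by simp

lemma fl_sum_error_gamma:
  assumes "fl_sum u M s" and "u \<ge> 0" and "real (size M - 1) * u < 1"
  shows "\<bar>s - sum_mset M\<bar> \<le> gamma u (size M - 1) * sum_mset (image_mset abs M)"
  using order_trans[OF fl_sum_error[OF assms(1,2)]
      mult_right_mono[OF one_plus_power_le_gamma[OF assms(2,3)] sum_mset_abs_nonneg]] .

lemma scaled_slice_sum_error:
  assumes c: "c > 0" and c_le: "c \<le> \<kappa> * \<bar>a\<bar>" and s: "s \<ge> 1"
  shows "\<bar>c * slice_sum t (a / c) s - a\<bar> \<le> \<kappa> / 2 ^ (s * t) * \<bar>a\<bar>"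
proof -
  have "c * slice_sum t (a / c) s - a = - (c * (a / c - slice_sum t (a / c) s))"
    using c by (simp add: algebra_simps)
  then have "\<bar>c * slice_sum t (a / c) s - a\<bar> = c * \<bar>a / c - slice_sum t (a / c) s\<bar>"
    using c by (simp add: abs_mult)
  also have "\<dots> \<le> c / 2 ^ (s * t)"
    using mult_left_mono[OF less_imp_le[OF slice_sum_error[OF s]], of c] c by simp
  also have "\<dots> \<le> \<kappa> / 2 ^ (s * t) * \<bar>a\<bar>"
    using c_le by (simp add: divide_right_mono)
  finally show ?thesis .
qed

lemma scaled_slice_abs_sum_le:
  assumes "c > 0"
  shows "(\<Sum>r\<in>{1..n}. c * \<bar>real_of_int (slice t (a / c) r) / 2 ^ (r * t)\<bar>) \<le> \<bar>a\<bar>"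
  using mult_left_mono[OF slice_abs_sum_le[where n = n and t = t and x = "a / c"], of c] assms
  by (simp add: sum_distrib_left abs_divide)

lemma abs_mult_perturbation_le:
  fixes x y x' y' :: real
  assumes "\<bar>x' - x\<bar> \<le> e * \<bar>x\<bar>" and "\<bar>y' - y\<bar> \<le> f * \<bar>y\<bar>"
  shows "\<bar>x' * y' - x * y\<bar> \<le> (e + f + e * f) * (\<bar>x\<bar> * \<bar>y\<bar>)"
proof -
  have eq: "x' * y' - x * y = (x' - x) * (y' - y) + (x' - x) * y + x * (y' - y)"
    by (simp add: algebra_simps)
  have "\<bar>x' * y' - x * y\<bar>
      \<le> \<bar>x' - x\<bar> * \<bar>y' - y\<bar> + \<bar>x' - x\<bar> * \<bar>y\<bar> + \<bar>x\<bar> * \<bar>y' - y\<bar>"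
    unfolding eq abs_mult[symmetric]
    by (rule order_trans[OF abs_triangle_ineq add_mono[OF abs_triangle_ineq order_refl]])
  also have "\<dots> \<le> (e * \<bar>x\<bar>) * (f * \<bar>y\<bar>) + (e * \<bar>x\<bar>) * \<bar>y\<bar> + \<bar>x\<bar> * (f * \<bar>y\<bar>)"
    using assms by (intro add_mono mult_mono) auto
  also have "\<dots> = (e + f + e * f) * (\<bar>x\<bar> * \<bar>y\<bar>)"
    by (simp add: algebra_simps)
  finally show ?thesis .
qed

lemma sum_sum_sum_mult_swap:
  fixes X :: "'l \<Rightarrow> 'q \<Rightarrow> 'a::semiring_0"
  shows
    "(\<Sum>l\<in>L. \<Sum>h\<in>H. \<Sum>q\<in>Q. X l q * Y h q)
      = (\<Sum>q\<in>Q. (\<Sum>l\<in>L. X l q) * (\<Sum>h\<in>H. Y h q))"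
proof -
  have "(\<Sum>q\<in>Q. (\<Sum>l\<in>L. X l q) * (\<Sum>h\<in>H. Y h q))
      = (\<Sum>q\<in>Q. \<Sum>l\<in>L. \<Sum>h\<in>H. X l q * Y h q)"
    by (intro sum.cong refl) (rule sum_product)
  also have "\<dots> = (\<Sum>l\<in>L. \<Sum>q\<in>Q. \<Sum>h\<in>H. X l q * Y h q)"
    by (rule sum.swap)
  also have "\<dots> = (\<Sum>l\<in>L. \<Sum>h\<in>H. \<Sum>q\<in>Q. X l q * Y h q)"
    by (intro sum.cong refl) (rule sum.swap)
  finally show ?thesis by (rule sym)
qed

(* The (l, h) summand of the (i, j) entry of C-tilde, in the form of the hypothesis on Chat. *)
definition slice_term ::
    "nat \<Rightarrow> real ^ 'k ^ 'm \<Rightarrow> real ^ 'n ^ 'k \<Rightarrow> 'm \<Rightarrow> 'n \<Rightarrow> nat \<times> nat \<Rightarrow> real" where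
  "slice_term t A B i j = (\<lambda>(l, h). alphaA A i * betaB B j * (1 / 2 ^ ((l + h) * t))
                                   * real_of_int (sliceprod t A B l h i j))"

lemma slice_term_eq:
  "slice_term t A B i j (l, h) =
    (\<Sum>q\<in>UNIV. (alphaA A i * (real_of_int (sliceA t A l i q) / 2 ^ (l * t)))
             * (betaB B j * (real_of_int (sliceB t B h q j) / 2 ^ (h * t))))"
  unfolding slice_term_def sliceprod_def
  by (simp add: sum_distrib_left sum_divide_distrib power_add ring_distribs mult_ac)

lemma sum_slice_term:
  "(\<Sum>x\<in>{1..sA} \<times> {1..sB}. slice_term t A B i j x) =
    (\<Sum>q\<in>UNIV. (alphaA A i * slice_sum t (A $ i $ q / alphaA A i) sA)
             * (betaB B j * slice_sum t (B $ q $ j / betaB B j) sB))"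
  unfolding sum.cartesian_product' slice_term_eq sum_sum_sum_mult_swap
  by (simp add: slice_sum_def sliceA_def sliceB_def sum_distrib_left)

lemma sum_abs_slice_term_le:
  "(\<Sum>x\<in>{1..sA} \<times> {1..sB}. \<bar>slice_term t A B i j x\<bar>) \<le> (mabs A ** mabs B) $ i $ j"
proof -
  let ?X = "\<lambda>l q. alphaA A i * \<bar>real_of_int (sliceA t A l i q) / 2 ^ (l * t)\<bar>"
  let ?Y = "\<lambda>h q. betaB B j * \<bar>real_of_int (sliceB t B h q j) / 2 ^ (h * t)\<bar>"
  have "(\<Sum>x\<in>{1..sA} \<times> {1..sB}. \<bar>slice_term t A B i j x\<bar>)
      \<le> (\<Sum>l\<in>{1..sA}. \<Sum>h\<in>{1..sB}. \<Sum>q\<in>UNIV. ?X l q * ?Y h q)"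
    unfolding sum.cartesian_product' slice_term_eq
    using alphaA_pos[of A i] betaB_pos[of B j]
    by (intro sum_mono order_trans[OF sum_abs]) (simp add: abs_mult)
  also have "\<dots> = (\<Sum>q\<in>UNIV. (\<Sum>l\<in>{1..sA}. ?X l q) * (\<Sum>h\<in>{1..sB}. ?Y h q))"
    by (rule sum_sum_sum_mult_swap)
  also have "\<dots> \<le> (\<Sum>q\<in>UNIV. \<bar>A $ i $ q\<bar> * \<bar>B $ q $ j\<bar>)"
    unfolding sliceA_def sliceB_def
    by (intro sum_mono mult_mono scaled_slice_abs_sum_le alphaA_pos betaB_pos)
       (auto intro!: sum_nonneg simp: less_imp_le[OF alphaA_pos] less_imp_le[OF betaB_pos])
  also have "\<dots> = (mabs A ** mabs B) $ i $ j"
    unfolding matrix_matrix_mult_def mabs_def by simp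
  finally show ?thesis .
qed

definition zeta :: "nat \<Rightarrow> nat \<Rightarrow> nat \<Rightarrow> real ^ 'k ^ 'm \<Rightarrow> real ^ 'n ^ 'k \<Rightarrow> real" where
  "zeta t sA sB A B = kappaA A / 2 ^ (sA * t) + kappaB B / 2 ^ (sB * t)
    + kappaA A * kappaB B / 2 ^ ((sA + sB) * t)"

lemma zeta_nonneg: "zeta t sA sB A B \<ge> 0"
  unfolding zeta_def using kappaA_nonneg[of A] kappaB_nonneg[of B] by simp

lemma sum_slice_term_error:
  assumes A_nz: "\<And>q. A $ i $ q \<noteq> 0" and B_nz: "\<And>q. B $ q $ j \<noteq> 0"
    and sA: "sA \<ge> 1" and sB: "sB \<ge> 1"
  shows "\<bar>(\<Sum>x\<in>{1..sA} \<times> {1..sB}. slice_term t A B i j x) - (A ** B) $ i $ j\<bar>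
    \<le> zeta t sA sB A B * (mabs A ** mabs B) $ i $ j"
proof -
  define eA :: real where "eA = kappaA A / 2 ^ (sA * t)"
  define eB :: real where "eB = kappaB B / 2 ^ (sB * t)"
  have "\<bar>(\<Sum>x\<in>{1..sA} \<times> {1..sB}. slice_term t A B i j x) - (A ** B) $ i $ j\<bar>
      \<le> (\<Sum>q\<in>UNIV. \<bar>(alphaA A i * slice_sum t (A $ i $ q / alphaA A i) sA)
                    * (betaB B j * slice_sum t (B $ q $ j / betaB B j) sB)
                    - A $ i $ q * B $ q $ j\<bar>)"
    unfolding sum_slice_term matrix_matrix_mult_def
    by (simp add: sum_subtractf[symmetric])
  also have "\<dots> \<le> (\<Sum>q\<in>UNIV. (eA + eB + eA * eB) * (\<bar>A $ i $ q\<bar> * \<bar>B $ q $ j\<bar>))"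
    unfolding eA_def eB_def
    by (intro sum_mono abs_mult_perturbation_le scaled_slice_sum_error alphaA_pos betaB_pos
        alphaA_le_kappaA betaB_le_kappaB A_nz B_nz sA sB)
  also have "\<dots> = (eA + eB + eA * eB) * (mabs A ** mabs B) $ i $ j"
    unfolding matrix_matrix_mult_def mabs_def by (simp add: sum_distrib_left)
  finally show ?thesis
    unfolding eA_def eB_def zeta_def by (simp add: power_add add_mult_distrib)
qed

lemma fl_sum_mset_set_error:
  assumes "fl_sum u (image_mset f (mset_set S)) s" and "u \<ge> 0"
    and "real (card S - 1) * u < 1"
  shows "\<bar>s - sum f S\<bar> \<le> gamma u (card S - 1) * (\<Sum>x\<in>S. \<bar>f x\<bar>)"
  using fl_sum_error_gamma[OF assms(1,2)] assms(3)
  by (simp add: sum_unfold_sum_mset image_mset.compositionality o_def)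

lemma sliced_product_entry_error:
  assumes A_nz: "\<And>q. A $ i $ q \<noteq> 0" and B_nz: "\<And>q. B $ q $ j \<noteq> 0"
    and sA: "sA \<ge> 1" and sB: "sB \<ge> 1"
    and u: "u \<ge> 0" and psi_u: "real (sA * sB) * u < 1"
    and fl: "fl_sum u (image_mset (slice_term t A B i j) (mset_set ({1..sA} \<times> {1..sB}))) c"
  shows "\<bar>c - (A ** B) $ i $ j\<bar> \<le> (zeta t sA sB A B
    + gamma u (sA * sB - 1) * (1 + zeta t sA sB A B)) * (mabs A ** mabs B) $ i $ j"
proof -
  let ?S = "{1..sA} \<times> {1..sB}" and ?P = "(mabs A ** mabs B) $ i $ j"
  let ?C = "\<Sum>x\<in>?S. slice_term t A B i j x" and ?\<gamma> = "gamma u (sA * sB - 1)"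
  have card_S: "card ?S = sA * sB" by (simp add: card_cartesian_product)
  have "real (sA * sB - 1) * u \<le> real (sA * sB) * u"
    using u by (intro mult_right_mono of_nat_mono) auto
  with psi_u have psi_u': "real (sA * sB - 1) * u < 1" by linarith
  then have \<gamma>_nonneg: "?\<gamma> \<ge> 0" using u by (rule gamma_nonneg[rotated])
  have "\<bar>c - ?C\<bar> \<le> ?\<gamma> * (\<Sum>x\<in>?S. \<bar>slice_term t A B i j x\<bar>)"
    using fl_sum_mset_set_error[OF fl u] psi_u' unfolding card_S .
  also have "\<dots> \<le> ?\<gamma> * ?P"
    using \<gamma>_nonneg by (intro mult_left_mono sum_abs_slice_term_le)
  finally have rounding: "\<bar>c - ?C\<bar> \<le> ?\<gamma> * ?P" .
  have truncation: "\<bar>?C - (A ** B) $ i $ j\<bar> \<le> zeta t sA sB A B * ?P"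
    using A_nz B_nz sA sB by (rule sum_slice_term_error)
  have "?P \<ge> 0" unfolding matrix_matrix_mult_def mabs_def by (simp add: sum_nonneg)
  then have "0 \<le> ?\<gamma> * zeta t sA sB A B * ?P"
    using \<gamma>_nonneg zeta_nonneg[of t sA sB A B] by simp
  with rounding truncation show ?thesis by (simp add: algebra_simps)
qed

theorem mainTheorem1:
  fixes p t sA sB :: nat
    and A :: "real ^ 'k::finite ^ 'm::finite"
    and B :: "real ^ 'n::finite ^ 'k"
    and Chat :: "real ^ 'n ^ 'm"
  assumes p: "p \<ge> 2" and t: "t \<ge> 1" and sA: "sA \<ge> 1" and sB: "sB \<ge> 1"
    and A_fp: "\<forall>i j. is_fp p (A $ i $ j) \<and> A $ i $ j \<noteq> 0"
    and B_fp: "\<forall>i j. is_fp p (B $ i $ j) \<and> B $ i $ j \<noteq> 0"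
    and exact_conv: "\<forall>l\<in>{1..sA}. \<forall>h\<in>{1..sB}. \<forall>i j.
           is_fp p (real_of_int (sliceprod t A B l h i j))"
    and psi_u: "real (sA * sB) * (1 / 2 ^ p) < 1"
    and Chat: "\<forall>i j. fl_sum (1 / 2 ^ p)
           (image_mset (\<lambda>(l, h). alphaA A i * betaB B j * (1 / 2 ^ ((l + h) * t))
                                   * real_of_int (sliceprod t A B l h i j))
              (mset_set ({1..sA} \<times> {1..sB})))
           (Chat $ i $ j)"
  shows "\<forall>i j. \<bar>Chat $ i $ j - (A ** B) $ i $ j\<bar> \<le>
     (let \<zeta> = kappaA A / 2 ^ (sA * t) + kappaB B / 2 ^ (sB * t)
               + kappaA A * kappaB B / 2 ^ ((sA + sB) * t)
      in \<zeta> + gamma (1 / 2 ^ p) (sA * sB - 1) * (1 + \<zeta>)) * (mabs A ** mabs B) $ i $ j"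
  (* The representability hypotheses only justify the standard model assumed for the
     summation; the error bound itself does not depend on them. *)
  using A_fp B_fp sA sB psi_u Chat unfolding Let_def zeta_def[symmetric]
  by (intro allI sliced_product_entry_error) (auto simp: slice_term_def)

end
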